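(* Let $R$ be a semifield and let $X,Y,Z$ be $R$-convex sets. If $f:X\times Y\to Z$ is a convex map (where $X\times Y$ carries the product convex structure), then $f$ is biconvex.
   Context: A semifield is a commutative semiring in which every nonzero element is invertible. $D_R$ is the monad on $\mathsf{Set}$ of finitely supported $R$-valued distributions summing to $1$; an $R$-convex set is a $D_R$-algebra $(X,\pi^X)$, and $\sum_i\alpha_ix_i$ denotes $\pi^X$ applied to the formal combination. The product $X\times Y$ is the product in the category of $R$-convex sets, with componentwise convex combinations. A map $f:X\times Y\to Z$ is biconvex if $f(\sum_i\alpha_ix_i,\sum_j\beta_jy_j)=\sum_{i,j}\alpha_i\beta_jf(x_i,y_j)$ for all convex combinations in $X$ and $Y$. *)

theory Defs
  imports Main
begin

definition supp :: "('a \<Rightarrow> 'r::zero) \<Rightarrow> 'a set" where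
  "supp d = {x. d x \<noteq> 0}"

definition is_dist :: "('a \<Rightarrow> 'r::comm_semiring_1) \<Rightarrow> bool" where
  "is_dist d \<longleftrightarrow> finite (supp d) \<and> sum d (supp d) = 1"

definition delta :: "'a \<Rightarrow> 'a \<Rightarrow> 'r::comm_semiring_1" where
  "delta x = (\<lambda>y. if y = x then 1 else 0)"

definition Dmap :: "('a \<Rightarrow> 'b) \<Rightarrow> ('a \<Rightarrow> 'r::comm_semiring_1) \<Rightarrow> 'b \<Rightarrow> 'r" where
  "Dmap f d = (\<lambda>y. sum d {x \<in> supp d. f x = y})"

definition Dmult :: "(('a \<Rightarrow> 'r) \<Rightarrow> 'r) \<Rightarrow> 'a \<Rightarrow> 'r::comm_semiring_1" where
  "Dmult Phi = (\<lambda>x. \<Sum>d\<in>supp Phi. Phi d * d x)"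

text \<open>R-convex set = D_R-algebra on the type 'x, with structure map pi
  (only its values on distributions matter).\<close>
definition convex_alg :: "(('x \<Rightarrow> 'r::comm_semiring_1) \<Rightarrow> 'x) \<Rightarrow> bool" where
  "convex_alg pi \<longleftrightarrow>
     (\<forall>x. pi (delta x) = x) \<and>
     (\<forall>Phi :: ('x \<Rightarrow> 'r) \<Rightarrow> 'r. is_dist Phi \<and> (\<forall>d\<in>supp Phi. is_dist d) \<longrightarrow>
        pi (Dmap pi Phi) = pi (Dmult Phi))"

definition convex_map ::
  "(('x \<Rightarrow> 'r::comm_semiring_1) \<Rightarrow> 'x) \<Rightarrow> (('z \<Rightarrow> 'r) \<Rightarrow> 'z) \<Rightarrow> ('x \<Rightarrow> 'z) \<Rightarrow> bool" where
  "convex_map piX piZ f \<longleftrightarrow> (\<forall>d. is_dist d \<longrightarrow> f (piX d) = piZ (Dmap f d))"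

definition prod_alg ::
  "(('x \<Rightarrow> 'r::comm_semiring_1) \<Rightarrow> 'x) \<Rightarrow> (('y \<Rightarrow> 'r) \<Rightarrow> 'y) \<Rightarrow> (('x \<times> 'y \<Rightarrow> 'r) \<Rightarrow> 'x \<times> 'y)" where
  "prod_alg piX piY = (\<lambda>d. (piX (Dmap fst d), piY (Dmap snd d)))"

text \<open>Biconvexity: f(sum_i a_i x_i, sum_j b_j y_j) = sum_{i,j} a_i b_j f(x_i,y_j).\<close>
definition biconvex ::
  "(('x \<Rightarrow> 'r::comm_semiring_1) \<Rightarrow> 'x) \<Rightarrow> (('y \<Rightarrow> 'r) \<Rightarrow> 'y) \<Rightarrow> (('z \<Rightarrow> 'r) \<Rightarrow> 'z)
     \<Rightarrow> ('x \<times> 'y \<Rightarrow> 'z) \<Rightarrow> bool" where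
  "biconvex piX piY piZ f \<longleftrightarrow>
     (\<forall>a b. is_dist a \<and> is_dist b \<longrightarrow>
        f (piX a, piY b) = piZ (Dmap f (\<lambda>(x, y). a x * b y)))"

end

theory Submission
  imports Defs
begin

text \<open>For distributions \<open>a\<close> on \<open>X\<close> and \<open>b\<close> on \<open>Y\<close>, the product distribution
  \<open>(x, y) \<mapsto> a x * b y\<close> on \<open>X \<times> Y\<close> has marginals \<open>a\<close> and \<open>b\<close>, so the product convex
  structure sends it to \<open>(\<Sum>a\<^sub>i x\<^sub>i, \<Sum>b\<^sub>j y\<^sub>j)\<close>. Convexity of \<open>f\<close> applied to this
  distribution is then literally biconvexity.\<close>

definition dist_prod :: "('a \<Rightarrow> 'r::comm_semiring_1) \<Rightarrow> ('b \<Rightarrow> 'r) \<Rightarrow> 'a \<times> 'b \<Rightarrow> 'r" where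
  "dist_prod a b = (\<lambda>(x, y). a x * b y)"

lemma supp_dist_prod_subset: "supp (dist_prod a b) \<subseteq> supp a \<times> supp b"
  by (auto simp: dist_prod_def supp_def)

lemma is_dist_dist_prod:
  assumes a: "is_dist a" and b: "is_dist b"
  shows "is_dist (dist_prod a b)"
proof -
  have fin: "finite (supp a \<times> supp b)"
    using a b by (simp add: is_dist_def)
  have "sum (dist_prod a b) (supp (dist_prod a b)) = sum (dist_prod a b) (supp a \<times> supp b)"
    using fin supp_dist_prod_subset by (rule sum.mono_neutral_left) (simp add: supp_def)
  also have "\<dots> = (\<Sum>x\<in>supp a. a x) * (\<Sum>y\<in>supp b. b y)"
    by (simp add: dist_prod_def sum.cartesian_product sum_product)
  also have "\<dots> = 1"
    using a b by (simp add: is_dist_def)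
  finally show ?thesis
    using fin supp_dist_prod_subset finite_subset unfolding is_dist_def by blast
qed

lemma Dmap_fst_dist_prod:
  assumes b: "is_dist b"
  shows "Dmap fst (dist_prod a b) = a"
proof
  fix x
  have "Dmap fst (dist_prod a b) x = sum (dist_prod a b) ({x} \<times> supp b)"
    unfolding Dmap_def
    by (rule sum.mono_neutral_left) (use b in \<open>auto simp: is_dist_def supp_def dist_prod_def\<close>)
  also have "\<dots> = a x * (\<Sum>y\<in>supp b. b y)"
    by (simp add: dist_prod_def sum.cartesian_product[symmetric] sum_distrib_left)
  finally show "Dmap fst (dist_prod a b) x = a x"
    using b by (simp add: is_dist_def)
qed

lemma Dmap_snd_dist_prod:
  assumes a: "is_dist a"
  shows "Dmap snd (dist_prod a b) = b"
proof
  fix y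
  have "Dmap snd (dist_prod a b) y = sum (dist_prod a b) (supp a \<times> {y})"
    unfolding Dmap_def
    by (rule sum.mono_neutral_left) (use a in \<open>auto simp: is_dist_def supp_def dist_prod_def\<close>)
  also have "\<dots> = (\<Sum>x\<in>supp a. a x) * b y"
    by (simp add: dist_prod_def sum.cartesian_product[symmetric] sum_distrib_right)
  finally show "Dmap snd (dist_prod a b) y = b y"
    using a by (simp add: is_dist_def)
qed

lemma prod_alg_dist_prod:
  assumes "is_dist a" and "is_dist b"
  shows "prod_alg piX piY (dist_prod a b) = (piX a, piY b)"
  using assms by (simp add: prod_alg_def Dmap_fst_dist_prod Dmap_snd_dist_prod)

lemma biconvex_if_convex_map_prod_alg:
  fixes piX :: "('x \<Rightarrow> 'r::comm_semiring_1) \<Rightarrow> 'x" and piY :: "('y \<Rightarrow> 'r) \<Rightarrow> 'y"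
  assumes "convex_map (prod_alg piX piY) piZ f"
  shows "biconvex piX piY piZ f"
  unfolding biconvex_def
proof (intro allI impI, elim conjE)
  fix a :: "'x \<Rightarrow> 'r" and b :: "'y \<Rightarrow> 'r"
  assume a: "is_dist a" and b: "is_dist b"
  have "f (piX a, piY b) = f (prod_alg piX piY (dist_prod a b))"
    by (simp add: prod_alg_dist_prod[OF a b])
  also have "\<dots> = piZ (Dmap f (dist_prod a b))"
    using assms is_dist_dist_prod[OF a b] by (simp add: convex_map_def)
  finally show "f (piX a, piY b) = piZ (Dmap f (\<lambda>(x, y). a x * b y))"
    by (simp only: dist_prod_def)
qed

theorem mainTheorem7:
  fixes piX :: "('x \<Rightarrow> 'r::comm_semiring_1) \<Rightarrow> 'x"
    and piY :: "('y \<Rightarrow> 'r) \<Rightarrow> 'y"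
    and piZ :: "('z \<Rightarrow> 'r) \<Rightarrow> 'z"
    and f :: "'x \<times> 'y \<Rightarrow> 'z"
  assumes semifield: "\<forall>a::'r. a \<noteq> 0 \<longrightarrow> (\<exists>b. a * b = 1)"
    and "convex_alg piX" and "convex_alg piY" and "convex_alg piZ"
    and "convex_map (prod_alg piX piY) piZ f"
  shows "biconvex piX piY piZ f"
  using assms(5) by (rule biconvex_if_convex_map_prod_alg)

end
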